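(* Let $0<\delta<1$, let $r\ge2$ be an integer, and let $G$ be an $(n,d,\lambda)$-graph with $\lambda<\delta d$. Then, with activation threshold $r$, every set of vertices of size larger than $\frac{(r-1)n}{(1-\delta)d}$ is contagious.
   Context: Bootstrap percolation with threshold $r\ge 2$ on a graph $G=(V,E)$: given a set $A_0\subseteq V$ of seeds, define for $i\ge1$ $A_i=A_{i-1}\cup\{v:|N(v)\cap A_{i-1}|\ge r\}$, where $N(v)$ is the set of neighbors of $v$, and $\langle A_0\rangle=\bigcup_i A_i$. The set $A_0$ is contagious if $\langle A_0\rangle=V$. An $(n,d,\lambda)$-graph is a $d$-regular graph on $n$ vertices whose adjacency eigenvalues $d=\lambda_1\ge\lambda_2\ge\dots\ge\lambda_n$ satisfy $\max\{|\lambda_2|,|\lambda_n|\}\le\lambda$. *)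

theory Defs
  imports Jordan_Normal_Form.Char_Poly
begin

definition simple_graph :: "nat \<Rightarrow> (nat \<Rightarrow> nat \<Rightarrow> bool) \<Rightarrow> bool" where
  "simple_graph n E \<longleftrightarrow>
     (\<forall>u v. E u v \<longrightarrow> u < n \<and> v < n) \<and>
     (\<forall>u v. E u v \<longrightarrow> E v u) \<and> (\<forall>v. \<not> E v v)"

definition nbhd :: "(nat \<Rightarrow> nat \<Rightarrow> bool) \<Rightarrow> nat \<Rightarrow> nat set" where
  "nbhd E v = {u. E v u}"

definition regular :: "nat \<Rightarrow> (nat \<Rightarrow> nat \<Rightarrow> bool) \<Rightarrow> nat \<Rightarrow> bool" where
  "regular n E d \<longleftrightarrow> (\<forall>v<n. card (nbhd E v) = d)"

definition adj_mat :: "nat \<Rightarrow> (nat \<Rightarrow> nat \<Rightarrow> bool) \<Rightarrow> real mat" where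
  "adj_mat n E = mat n n (\<lambda>(i, j). if E i j then 1 else 0)"

text \<open>(n,d,lambda)-graph: d-regular simple graph on n vertices whose adjacency
  eigenvalues (with multiplicity, in non-increasing order) d = l_1 >= ... >= l_n
  satisfy max(|l_2|, |l_n|) <= lambda, i.e. |l_i| <= lambda for 2 <= i <= n.\<close>

definition nd_lambda_graph ::
  "nat \<Rightarrow> nat \<Rightarrow> real \<Rightarrow> (nat \<Rightarrow> nat \<Rightarrow> bool) \<Rightarrow> bool" where
  "nd_lambda_graph n d lam E \<longleftrightarrow>
     simple_graph n E \<and> regular n E d \<and>
     (\<exists>ls :: real list. length ls = n \<and> sorted_wrt (\<ge>) ls \<and>
        char_poly (adj_mat n E) = (\<Prod>a\<leftarrow>ls. [:- a, 1:]) \<and>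
        ls ! 0 = real d \<and>
        (\<forall>i. 1 \<le> i \<and> i < n \<longrightarrow> \<bar>ls ! i\<bar> \<le> lam))"

definition boot_step ::
  "nat \<Rightarrow> nat \<Rightarrow> (nat \<Rightarrow> nat \<Rightarrow> bool) \<Rightarrow> nat set \<Rightarrow> nat set" where
  "boot_step n r E A = A \<union> {v \<in> {0..<n}. card (nbhd E v \<inter> A) \<ge> r}"

definition boot_closure ::
  "nat \<Rightarrow> nat \<Rightarrow> (nat \<Rightarrow> nat \<Rightarrow> bool) \<Rightarrow> nat set \<Rightarrow> nat set" where
  "boot_closure n r E A0 = (\<Union>i. (boot_step n r E ^^ i) A0)"

definition contagious ::
  "nat \<Rightarrow> nat \<Rightarrow> (nat \<Rightarrow> nat \<Rightarrow> bool) \<Rightarrow> nat set \<Rightarrow> bool" where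
  "contagious n r E A0 \<longleftrightarrow> boot_closure n r E A0 = {0..<n}"

end

theory Submission
  imports Defs
begin

text \<open>
  Let B be the closure of A and suppose its complement S is nonempty. Since B is closed under
  the bootstrap rule, every vertex of S has at most r - 1 neighbours in B, hence at least
  d - r + 1 in S. On the other hand, diagonalizing the adjacency matrix orthogonally and
  splitting the indicator vector of S along the all-ones eigenvector bounds twice the number
  of edges inside S by d s^2/n + \<lambda> s (1 - s/n), where s = |S|. Together these give
  (d - \<lambda>) |B| \<le> (r - 1) n, so |A| \<le> |B| \<le> (r - 1) n / ((1 - \<delta>) d).
  The orthogonal diagonalization is obtained by deflating one eigenvector at a time with a
  Householder reflection.
\<close>

lemma scalar_prod_self_pos:
  fixes v :: "real vec"
  assumes "v \<in> carrier_vec n" "v \<noteq> 0\<^sub>v n"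
  shows "v \<bullet> v > 0"
  using conjugate_square_ge_0_vec[of v] conjugate_square_eq_0_vec[OF assms(1)] assms(2)
  by simp

lemma mult_mat_vec_unit_vec:
  fixes M :: "'a :: semiring_1 mat"
  assumes "M \<in> carrier_mat nr n" "j < n"
  shows "M *\<^sub>v unit_vec n j = col M j"
proof -
  have "dim_row M = nr" "dim_col M = n" using assms(1) by auto
  then show ?thesis using assms(2) by (intro eq_vecI) auto
qed

section \<open>Householder reflections\<close>

lemma mult_if_delta:
  "(if P then (1::real) else 0) * x = (if P then x else 0)"
  "x * (if P then (1::real) else 0) = (if P then x else 0)"
  by auto

definition householder :: "nat \<Rightarrow> real vec \<Rightarrow> real mat" where
  "householder n w = mat n n (\<lambda>(i,j). (if i = j then 1 else 0) - 2 / (w \<bullet> w) * w $ i * w $ j)"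

lemma householder_carrier [simp]: "householder n w \<in> carrier_mat n n"
  by (simp add: householder_def)

lemma transpose_householder [simp]: "transpose_mat (householder n w) = householder n w"
  by (rule eq_matI) (auto simp: householder_def)

lemma householder_involution:
  assumes w: "w \<in> carrier_vec n"
  shows "householder n w * householder n w = 1\<^sub>m n"
proof (rule eq_matI)
  fix i j assume "i < dim_row (1\<^sub>m n)" "j < dim_col (1\<^sub>m n)"
  then have i: "i < n" and j: "j < n" by auto
  define c where "c = 2 / (w \<bullet> w)"
  have ww: "w \<bullet> w = (\<Sum>k<n. w $ k * w $ k)"
    using w by (simp add: scalar_prod_def lessThan_atLeast0)
  have "(householder n w * householder n w) $$ (i,j)
      = (\<Sum>k<n. ((if i = k then 1 else 0) - c * w$i * w$k) * ((if k = j then 1 else 0) - c * w$k * w$j))"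
    using i j by (simp add: householder_def scalar_prod_def c_def lessThan_atLeast0)
  also have "\<dots> = (\<Sum>k<n. (if i = k then 1 else 0) * (if k = j then 1 else 0))
      - (\<Sum>k<n. (if i = k then 1 else 0) * (c * w$k * w$j))
      - (\<Sum>k<n. (c * w$i * w$k) * (if k = j then 1 else 0))
      + (c * c * w$i * w$j) * (\<Sum>k<n. w $ k * w $ k)"
    by (simp add: algebra_simps sum_subtractf sum.distrib sum_distrib_left)
  also have "\<dots> = (if i = j then 1 else 0) - 2 * c * w$i * w$j + c * c * w$i * w$j * (w \<bullet> w)"
    using i j by (simp add: ww mult_if_delta)
  also have "\<dots> = (if i = j then 1 else 0)"
  proof (cases "w \<bullet> w = 0")
    case False
    then show ?thesis by (simp add: c_def field_simps)
  qed (simp add: c_def)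
  finally show "(householder n w * householder n w) $$ (i,j) = 1\<^sub>m n $$ (i,j)"
    using i j by simp
qed (auto simp: householder_def)

lemma householder_unit_vec_0:
  assumes u: "u \<in> carrier_vec n" "u \<bullet> u = 1" and n: "0 < n"
  shows "householder n (u - unit_vec n 0) *\<^sub>v unit_vec n 0 = u"
proof -
  define w where "w = u - unit_vec n 0"
  have w: "w \<in> carrier_vec n" using u by (simp add: w_def)
  have e: "unit_vec n 0 \<in> carrier_vec n" by simp
  have ww: "w \<bullet> w = - 2 * w $ 0"
  proof -
    have "w \<bullet> w = u \<bullet> (u - unit_vec n 0) - unit_vec n 0 \<bullet> (u - unit_vec n 0)"
      unfolding w_def by (rule minus_scalar_prod_distrib[OF u(1) e]) (use u in simp)
    also have "\<dots> = (u \<bullet> u - u \<bullet> unit_vec n 0) - (unit_vec n 0 \<bullet> u - unit_vec n 0 \<bullet> unit_vec n 0)"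
      by (simp only: scalar_prod_minus_distrib[OF u(1) u(1) e] scalar_prod_minus_distrib[OF e u(1) e])
    finally show ?thesis using u n by (simp add: w_def)
  qed
  have "householder n w *\<^sub>v unit_vec n 0 = u"
  proof (cases "w \<bullet> w = 0")
    case True
    then have "w = 0\<^sub>v n" using w scalar_prod_self_pos by fastforce
    moreover have "u = w + unit_vec n 0" using u by (auto simp: w_def)
    ultimately have "u = unit_vec n 0" by simp
    moreover have "householder n w = 1\<^sub>m n"
      using True by (intro eq_matI) (auto simp: householder_def)
    ultimately show ?thesis by simp
  next
    case False
    then have w0: "2 / (w \<bullet> w) * w $ 0 = -1" using ww by (simp add: field_simps)
    show ?thesis
    proof (rule eq_vecI)
      fix i assume "i < dim_vec u"
      then have i: "i < n" using u by simp
      have "(householder n w *\<^sub>v unit_vec n 0) $ i = (if i = 0 then 1 else 0) - 2 / (w \<bullet> w) * w $ 0 * w $ i"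
        using i n by (simp add: mult_mat_vec_unit_vec[of _ n n] householder_def)
      also have "\<dots> = u $ i" using i n u w0 by (simp add: w_def)
      finally show "(householder n w *\<^sub>v unit_vec n 0) $ i = u $ i" .
    qed (use u in \<open>simp add: householder_def\<close>)
  qed
  then show ?thesis by (simp add: w_def)
qed

lemma unit_eigenvector_exists:
  fixes A :: "real mat"
  assumes A: "A \<in> carrier_mat n n" and e: "eigenvalue A e"
  obtains u where "u \<in> carrier_vec n" "u \<bullet> u = 1" "A *\<^sub>v u = e \<cdot>\<^sub>v u"
proof -
  obtain v where v: "v \<in> carrier_vec n" "v \<noteq> 0\<^sub>v n" and Av: "A *\<^sub>v v = e \<cdot>\<^sub>v v"
    using e A unfolding eigenvalue_def eigenvector_def by auto
  define u where "u = (1 / sqrt (v \<bullet> v)) \<cdot>\<^sub>v v"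
  have vv: "v \<bullet> v > 0" using scalar_prod_self_pos[OF v] .
  have "u \<bullet> u = 1"
    using v vv by (simp add: u_def field_simps)
  moreover have "A *\<^sub>v u = e \<cdot>\<^sub>v u"
    using A v Av by (simp add: u_def mult_mat_vec smult_smult_assoc mult.commute)
  ultimately show thesis by (rule that[rotated]) (use v in \<open>simp add: u_def\<close>)
qed

lemma householder_deflation:
  fixes A :: "real mat"
  assumes A: "A \<in> carrier_mat (Suc m) (Suc m)" "transpose_mat A = A"
    and u: "u \<in> carrier_vec (Suc m)" "u \<bullet> u = 1" "A *\<^sub>v u = e \<cdot>\<^sub>v u"
  defines "H \<equiv> householder (Suc m) (u - unit_vec (Suc m) 0)"
  obtains A3 where "A3 \<in> carrier_mat m m" "transpose_mat A3 = A3"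
    "H * A * H = four_block_mat (mat 1 1 (\<lambda>_. e)) (0\<^sub>m 1 m) (0\<^sub>m m 1) A3"
proof -
  let ?n = "Suc m"
  have H: "H \<in> carrier_mat ?n ?n" "transpose_mat H = H" "H * H = 1\<^sub>m ?n"
    using u(1) by (simp_all add: H_def householder_involution)
  have He: "H *\<^sub>v unit_vec ?n 0 = u"
    unfolding H_def by (rule householder_unit_vec_0[OF u(1,2)]) simp
  have "H *\<^sub>v u = (H * H) *\<^sub>v unit_vec ?n 0"
    using H(1) by (simp add: He[symmetric])
  then have Hu: "H *\<^sub>v u = unit_vec ?n 0"
    unfolding H(3) by simp
  define A' where "A' = H * A * H"
  have A': "A' \<in> carrier_mat ?n ?n" using H A by (simp add: A'_def)
  have sym: "transpose_mat A' = A'"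
  proof -
    have "transpose_mat A' = transpose_mat H * transpose_mat (H * A)"
      unfolding A'_def by (rule transpose_mult[of _ ?n ?n]) (use H A in auto)
    also have "transpose_mat (H * A) = transpose_mat A * transpose_mat H"
      by (rule transpose_mult[of _ ?n ?n]) (use H A in auto)
    finally show ?thesis using H A by (simp add: A'_def)
  qed
  txt \<open>H swaps u and the first unit vector, so the latter is an eigenvector of H A H;
    by symmetry the first row and column of H A H vanish off the diagonal.\<close>
  have "A' *\<^sub>v unit_vec ?n 0 = e \<cdot>\<^sub>v unit_vec ?n 0"
    using H A u by (simp add: A'_def assoc_mult_mat_vec[of _ ?n ?n _ ?n] He Hu mult_mat_vec)
  then have col_eq: "col A' 0 = e \<cdot>\<^sub>v unit_vec ?n 0"
    using mult_mat_vec_unit_vec[OF A', of 0] by simp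
  have col0: "A' $$ (i,0) = (if i = 0 then e else 0)" if "i < ?n" for i
    using arg_cong[OF col_eq, of "\<lambda>v. v $ i"] A' that by simp
  have index_sym: "A' $$ (i,j) = A' $$ (j,i)" if "i < ?n" "j < ?n" for i j
    using arg_cong[OF sym, of "\<lambda>M. M $$ (i,j)"] A' that by simp
  have row0: "A' $$ (0,j) = (if j = 0 then e else 0)" if "j < ?n" for j
    using col0[OF that] index_sym[OF _ that] by simp
  define A3 where "A3 = mat m m (\<lambda>(i,j). A' $$ (Suc i, Suc j))"
  have sym3: "transpose_mat A3 = A3"
    using index_sym by (intro eq_matI) (auto simp: A3_def)
  have block: "A' = four_block_mat (mat 1 1 (\<lambda>_. e)) (0\<^sub>m 1 m) (0\<^sub>m m 1) A3"
  proof (rule eq_matI)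
    fix i j assume "i < dim_row (four_block_mat (mat 1 1 (\<lambda>_. e)) (0\<^sub>m 1 m) (0\<^sub>m m 1) A3)"
      "j < dim_col (four_block_mat (mat 1 1 (\<lambda>_. e)) (0\<^sub>m 1 m) (0\<^sub>m m 1) A3)"
    then have "i < ?n" "j < ?n" by (auto simp: A3_def)
    then show "A' $$ (i, j) = four_block_mat (mat 1 1 (\<lambda>_. e)) (0\<^sub>m 1 m) (0\<^sub>m m 1) A3 $$ (i, j)"
      using row0 col0 by (cases i; cases j) (auto simp: A3_def)
  qed (use A' in \<open>auto simp: A3_def\<close>)
  show thesis
    by (rule that[OF _ sym3 block[unfolded A'_def]]) (simp add: A3_def)
qed

section \<open>Orthogonal diagonalization of real symmetric matrices\<close>

lemma orthogonal_congruence_mult: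
  fixes P Q :: "'a :: comm_ring_1 mat"
  assumes P: "P \<in> carrier_mat n n" "transpose_mat P * P = 1\<^sub>m n"
    and Q: "Q \<in> carrier_mat n n" "transpose_mat Q * Q = 1\<^sub>m n"
    and A: "A \<in> carrier_mat n n"
  shows "transpose_mat (P * Q) * (P * Q) = 1\<^sub>m n"
    and "transpose_mat (P * Q) * A * (P * Q) = transpose_mat Q * (transpose_mat P * A * P) * Q"
proof -
  have T: "transpose_mat (P * Q) = transpose_mat Q * transpose_mat P"
    using P Q by (simp add: transpose_mult[of _ n n])
  have "transpose_mat P * (P * Q) = Q"
    by (subst assoc_mult_mat[symmetric, of _ n n _ n _ n]) (use P Q in auto)
  then show "transpose_mat (P * Q) * (P * Q) = 1\<^sub>m n"
    unfolding T by (subst assoc_mult_mat[of _ n n _ n _ n]) (use P Q \<open>transpose_mat P * (P * Q) = Q\<close> in auto)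
  show "transpose_mat (P * Q) * A * (P * Q) = transpose_mat Q * (transpose_mat P * A * P) * Q"
    using P Q A unfolding T by (simp add: assoc_mult_mat[of _ n n _ n _ n])
qed

lemma orthogonal_congruence_four_block:
  fixes U :: "'a :: comm_ring_1 mat"
  assumes U: "U \<in> carrier_mat m m" "transpose_mat U * U = 1\<^sub>m m"
    and A: "A \<in> carrier_mat m m" and a: "a \<in> carrier_mat 1 1"
  defines "B \<equiv> four_block_mat (1\<^sub>m 1) (0\<^sub>m 1 m) (0\<^sub>m m 1) U"
  shows "transpose_mat B * B = 1\<^sub>m (Suc m)"
    and "transpose_mat B * four_block_mat a (0\<^sub>m 1 m) (0\<^sub>m m 1) A * B
      = four_block_mat a (0\<^sub>m 1 m) (0\<^sub>m m 1) (transpose_mat U * A * U)"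
proof -
  have T: "transpose_mat B = four_block_mat (1\<^sub>m 1) (0\<^sub>m 1 m) (0\<^sub>m m 1) (transpose_mat U)"
    unfolding B_def by (subst transpose_four_block_mat[of _ 1 1 _ m _ m]) (use U in auto)
  show "transpose_mat B * B = 1\<^sub>m (Suc m)"
    unfolding T unfolding B_def
    by (subst mult_four_block_mat[of _ 1 1 _ m _ m]) (use U in auto)
  show "transpose_mat B * four_block_mat a (0\<^sub>m 1 m) (0\<^sub>m m 1) A * B
      = four_block_mat a (0\<^sub>m 1 m) (0\<^sub>m m 1) (transpose_mat U * A * U)"
    unfolding T unfolding B_def using U A a
    by (subst mult_four_block_mat[of _ 1 1 _ m _ m], auto,
        subst mult_four_block_mat[of _ 1 1 _ m _ m], auto)
qed

theorem symmetric_mat_orthogonal_diagonalization: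
  fixes A :: "real mat"
  assumes "A \<in> carrier_mat n n" "transpose_mat A = A" "char_poly A = (\<Prod>e\<leftarrow>es. [:- e, 1:])"
  shows "\<exists>U \<in> carrier_mat n n. transpose_mat U * U = 1\<^sub>m n \<and>
    transpose_mat U * A * U = mat_diag n (\<lambda>i. es ! i)"
  using assms
proof (induction es arbitrary: n A)
  case Nil
  then have "n = 0" using degree_monic_char_poly[OF Nil(1)] by simp
  then show ?case by (intro bexI[of _ "1\<^sub>m 0"]) (auto intro!: eq_matI simp: mat_diag_def)
next
  case (Cons e es n A)
  have A: "A \<in> carrier_mat n n" "transpose_mat A = A" and cp: "char_poly A = [:-e,1:] * (\<Prod>e\<leftarrow>es. [:- e, 1:])"
    using Cons.prems by auto
  have "degree (char_poly A) = Suc (degree (\<Prod>e\<leftarrow>es. [:- e, 1:]))"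
    unfolding cp by (subst degree_mult_eq) (auto simp: monic_prod_list)
  then obtain m where n: "n = Suc m"
    using degree_monic_char_poly[OF A(1)] by (cases n) auto
  have "eigenvalue A e" unfolding eigenvalue_root_char_poly[OF A(1)] cp by simp
  then obtain u where u: "u \<in> carrier_vec n" "u \<bullet> u = 1" "A *\<^sub>v u = e \<cdot>\<^sub>v u"
    using unit_eigenvector_exists A(1) by blast
  define H where "H = householder n (u - unit_vec n 0)"
  have H: "H \<in> carrier_mat n n" "transpose_mat H = H" "transpose_mat H * H = 1\<^sub>m n"
    using u(1) by (simp_all add: H_def householder_involution)
  define a :: "real mat" where "a = mat 1 1 (\<lambda>_. e)"
  obtain A3 where A3: "A3 \<in> carrier_mat m m" "transpose_mat A3 = A3"
    and block: "H * A * H = four_block_mat a (0\<^sub>m 1 m) (0\<^sub>m m 1) A3"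
    using householder_deflation[of A m u e] A u unfolding H_def a_def n by blast
  have "similar_mat (H * A * H) A"
    unfolding similar_mat_def using H A by (intro exI similar_mat_witI[of _ _ n]) auto
  then have "char_poly (H * A * H) = char_poly A"
    by (rule char_poly_similar)
  moreover have "char_poly (H * A * H) = [:-e,1:] * char_poly A3"
    unfolding block by (subst char_poly_four_block_zeros_col[OF _ _ A3(1)])
      (auto simp: a_def char_poly_defs det_def sign_def)
  ultimately have "char_poly A3 = (\<Prod>e\<leftarrow>es. [:- e, 1:])"
    using cp by (metis mult_cancel_left pCons_eq_0_iff zero_neq_one)
  then obtain U3 where U3: "U3 \<in> carrier_mat m m" "transpose_mat U3 * U3 = 1\<^sub>m m"
    and D3: "transpose_mat U3 * A3 * U3 = mat_diag m (\<lambda>i. es ! i)"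
    using Cons.IH A3 by blast
  define B where "B = four_block_mat (1\<^sub>m 1) (0\<^sub>m 1 m) (0\<^sub>m m 1) U3"
  have B: "B \<in> carrier_mat n n" "transpose_mat B * B = 1\<^sub>m n"
    using orthogonal_congruence_four_block(1)[OF U3] U3 by (auto simp: B_def n)
  have "transpose_mat B * (transpose_mat H * A * H) * B
      = four_block_mat a (0\<^sub>m 1 m) (0\<^sub>m m 1) (mat_diag m (\<lambda>i. es ! i))"
    unfolding H(2) block B_def D3[symmetric]
    by (rule orthogonal_congruence_four_block(2)[OF U3 A3(1)]) (simp add: a_def)
  also have "\<dots> = mat_diag n (\<lambda>i. (e # es) ! i)"
    by (rule eq_matI) (auto simp: a_def mat_diag_def n nth_Cons')
  finally show ?case
    using orthogonal_congruence_mult[OF H(1,3) B A(1)] H B by (intro bexI[of _ "H * B"]) auto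
qed

section \<open>Quadratic forms below the top eigenvalue\<close>

lemma mat_diag_mult_vec_index:
  assumes "v \<in> carrier_vec n" "i < n"
  shows "(mat_diag n f *\<^sub>v v) $ i = f i * v $ i"
proof -
  have "(mat_diag n f *\<^sub>v v) $ i = (\<Sum>k\<in>{0..<n}. (if i = k then f k else 0) * v $ k)"
    using assms by (simp add: mat_diag_def scalar_prod_def)
  also have "\<dots> = (\<Sum>k\<in>{0..<n}. if i = k then f i * v $ k else 0)"
    by (rule sum.cong) auto
  finally show ?thesis using assms(2) by simp
qed

lemma scalar_prod_mat_diag:
  fixes f :: "nat \<Rightarrow> real"
  assumes "v \<in> carrier_vec n"
  shows "v \<bullet> (mat_diag n f *\<^sub>v v) = (\<Sum>i<n. f i * (v $ i)\<^sup>2)"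
proof -
  have dim: "dim_vec (mat_diag n f *\<^sub>v v) = n" by (simp add: mat_diag_def)
  show ?thesis
    unfolding scalar_prod_def lessThan_atLeast0 dim
  proof (rule sum.cong)
    fix i assume "i \<in> {0..<n}"
    then show "v $ i * (mat_diag n f *\<^sub>v v) $ i = f i * (v $ i)\<^sup>2"
      using mat_diag_mult_vec_index[OF assms, of i] by (simp add: power2_eq_square)
  qed (rule refl)
qed

lemma scalar_prod_eq_first_components:
  fixes v w :: "real vec"
  assumes "v \<in> carrier_vec n" "w \<in> carrier_vec n" "0 < n" "\<And>i. 0 < i \<Longrightarrow> i < n \<Longrightarrow> w $ i = 0"
  shows "v \<bullet> w = v $ 0 * w $ 0"
  using assms sum.atLeast_Suc_lessThan[OF assms(3), of "\<lambda>i. v $ i * w $ i"]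
  by (simp add: scalar_prod_def)

lemma orthogonal_mat_transpose_scalar_prod:
  fixes U :: "real mat"
  assumes U: "U \<in> carrier_mat n n" "transpose_mat U * U = 1\<^sub>m n"
    and v: "v \<in> carrier_vec n" and w: "w \<in> carrier_vec n"
  shows "(transpose_mat U *\<^sub>v v) \<bullet> (transpose_mat U *\<^sub>v w) = v \<bullet> w"
proof -
  have "U * transpose_mat U = 1\<^sub>m n"
    using mat_mult_left_right_inverse[of "transpose_mat U" n U] U by simp
  then have "U *\<^sub>v (transpose_mat U *\<^sub>v w) = w"
    using U w by (simp flip: assoc_mult_mat_vec[of _ n n _ n])
  then show ?thesis
    using transpose_vec_mult_scalar[of U n n "transpose_mat U *\<^sub>v w" v] U v w by simp
qed

lemma orthogonal_congruence_mult_vec: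
  fixes U :: "real mat"
  assumes U: "U \<in> carrier_mat n n" "transpose_mat U * U = 1\<^sub>m n"
    and A: "A \<in> carrier_mat n n" and v: "v \<in> carrier_vec n"
  shows "(transpose_mat U * A * U) *\<^sub>v (transpose_mat U *\<^sub>v v) = transpose_mat U *\<^sub>v (A *\<^sub>v v)"
proof -
  have "U * transpose_mat U = 1\<^sub>m n"
    using mat_mult_left_right_inverse[of "transpose_mat U" n U] U by simp
  then have "U *\<^sub>v (transpose_mat U *\<^sub>v v) = v"
    using U v by (simp flip: assoc_mult_mat_vec[of _ n n _ n])
  then show ?thesis
    using U A v by (simp add: assoc_mult_mat_vec[of _ n n _ n])
qed

lemma quadratic_form_le_by_second_eigenvalue:
  fixes A :: "real mat" and ls :: "real list"
  assumes A: "A \<in> carrier_mat n n" "transpose_mat A = A"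
    and cp: "char_poly A = (\<Prod>e\<leftarrow>ls. [:- e, 1:])"
    and ones: "A *\<^sub>v vec n (\<lambda>_. 1) = d \<cdot>\<^sub>v vec n (\<lambda>_. 1)"
    and top: "ls ! 0 = d" and rest: "\<And>i. 1 \<le> i \<Longrightarrow> i < n \<Longrightarrow> ls ! i \<le> lam"
    and gap: "lam < d" and n: "0 < n" and x: "x \<in> carrier_vec n"
  shows "x \<bullet> (A *\<^sub>v x)
    \<le> d * (x \<bullet> vec n (\<lambda>_. 1))\<^sup>2 / n + lam * (x \<bullet> x - (x \<bullet> vec n (\<lambda>_. 1))\<^sup>2 / n)"
proof -
  define one :: "real vec" where "one = vec n (\<lambda>_. 1)"
  define D where "D = mat_diag n (\<lambda>i. ls ! i)"
  obtain U where U: "U \<in> carrier_mat n n" "transpose_mat U * U = 1\<^sub>m n"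
    and UAU: "transpose_mat U * A * U = D"
    using symmetric_mat_orthogonal_diagonalization[OF A cp] unfolding D_def by blast
  have one: "one \<in> carrier_vec n" by (simp add: one_def)
  define y where "y = transpose_mat U *\<^sub>v x"
  define z where "z = transpose_mat U *\<^sub>v one"
  have y: "y \<in> carrier_vec n" and z: "z \<in> carrier_vec n"
    using U x by (auto simp: y_def z_def one_def)
  txt \<open>z is an eigenvector of D for d, and all diagonal entries of D except the first lie
    below d, so z is concentrated on the first coordinate.\<close>
  have Dz: "D *\<^sub>v z = d \<cdot>\<^sub>v z"
    using orthogonal_congruence_mult_vec[OF U A(1) one] U one
    by (simp add: UAU z_def ones[folded one_def] mult_mat_vec)
  have z_tail: "z $ i = 0" if "0 < i" "i < n" for i
  proof -
    have "ls ! i * z $ i = d * z $ i"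
      using arg_cong[OF Dz, of "\<lambda>v. v $ i"] mat_diag_mult_vec_index[OF z that(2)] that z
      by (simp add: D_def)
    moreover have "ls ! i \<noteq> d" using rest[of i] gap that by auto
    ultimately show ?thesis by simp
  qed
  have "z $ 0 * z $ 0 = n"
    using orthogonal_mat_transpose_scalar_prod[OF U one one]
      scalar_prod_eq_first_components[OF z z n z_tail]
    by (simp add: z_def one_def scalar_prod_def)
  moreover have "y $ 0 * z $ 0 = x \<bullet> one"
    using orthogonal_mat_transpose_scalar_prod[OF U x one]
      scalar_prod_eq_first_components[OF y z n z_tail]
    by (simp add: y_def z_def)
  ultimately have y0: "(y $ 0)\<^sup>2 = (x \<bullet> one)\<^sup>2 / n"
    using n by (simp add: field_simps power2_eq_square) (metis mult.commute mult.left_commute)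
  have split: "(\<Sum>i<n. f i) = f 0 + (\<Sum>i\<in>{1..<n}. f i)" for f :: "nat \<Rightarrow> real"
    using sum.atLeast_Suc_lessThan[OF n, of f] by (simp add: lessThan_atLeast0)
  have "x \<bullet> (A *\<^sub>v x) = y \<bullet> (D *\<^sub>v y)"
    using orthogonal_mat_transpose_scalar_prod[OF U x, of "A *\<^sub>v x"]
      orthogonal_congruence_mult_vec[OF U A(1) x] A(1) x
    by (simp add: y_def UAU)
  also have "\<dots> = d * (y $ 0)\<^sup>2 + (\<Sum>i\<in>{1..<n}. ls ! i * (y $ i)\<^sup>2)"
    by (simp add: D_def scalar_prod_mat_diag[OF y] split top)
  also have "\<dots> \<le> d * (y $ 0)\<^sup>2 + lam * (\<Sum>i\<in>{1..<n}. (y $ i)\<^sup>2)"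
    unfolding sum_distrib_left by (intro add_left_mono sum_mono mult_right_mono) (auto intro: rest)
  also have "(\<Sum>i\<in>{1..<n}. (y $ i)\<^sup>2) = y \<bullet> y - (y $ 0)\<^sup>2"
    using y split[of "\<lambda>i. (y $ i)\<^sup>2"] by (simp add: scalar_prod_def power2_eq_square lessThan_atLeast0)
  also have "y \<bullet> y = x \<bullet> x"
    unfolding y_def by (rule orthogonal_mat_transpose_scalar_prod[OF U x x])
  finally show ?thesis by (simp add: y0 one_def)
qed

section \<open>Adjacency matrices\<close>

definition indicator_vec :: "nat \<Rightarrow> nat set \<Rightarrow> real vec" where
  "indicator_vec n S = vec n (\<lambda>i. if i \<in> S then 1 else 0)"

lemma indicator_vec_carrier [simp]: "indicator_vec n S \<in> carrier_vec n"
  by (simp add: indicator_vec_def)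

lemma scalar_prod_indicator_vec_ones:
  assumes "S \<subseteq> {0..<n}"
  shows "indicator_vec n S \<bullet> vec n (\<lambda>_. 1) = real (card S)"
  using assms by (simp add: indicator_vec_def scalar_prod_def sum.If_cases Int_absorb1)

lemma scalar_prod_indicator_vec_self:
  assumes "S \<subseteq> {0..<n}"
  shows "indicator_vec n S \<bullet> indicator_vec n S = real (card S)"
proof -
  have "indicator_vec n S \<bullet> indicator_vec n S = (\<Sum>i\<in>{0..<n}. if i \<in> S then 1 else (0::real))"
    unfolding indicator_vec_def scalar_prod_def by (rule sum.cong) auto
  then show ?thesis using assms by (simp add: sum.If_cases Int_absorb1)
qed

lemma adj_mat_carrier [simp]: "adj_mat n E \<in> carrier_mat n n"
  by (simp add: adj_mat_def)

lemma transpose_adj_mat: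
  assumes "simple_graph n E"
  shows "transpose_mat (adj_mat n E) = adj_mat n E"
  using assms unfolding simple_graph_def by (intro eq_matI) (auto simp: adj_mat_def)

lemma nbhd_eq:
  assumes "simple_graph n E"
  shows "nbhd E v = {u \<in> {0..<n}. E v u}"
  using assms unfolding simple_graph_def nbhd_def by auto

lemma adj_mat_mult_ones:
  assumes "simple_graph n E" "regular n E d"
  shows "adj_mat n E *\<^sub>v vec n (\<lambda>_. 1) = real d \<cdot>\<^sub>v vec n (\<lambda>_. 1)"
proof (rule eq_vecI)
  fix i assume "i < dim_vec (real d \<cdot>\<^sub>v vec n (\<lambda>_. 1 :: real))"
  then have i: "i < n" by simp
  have "card {j \<in> {0..<n}. E i j} = d"
    using assms i unfolding regular_def nbhd_eq[OF assms(1)] by blast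
  then show "(adj_mat n E *\<^sub>v vec n (\<lambda>_. 1)) $ i = (real d \<cdot>\<^sub>v vec n (\<lambda>_. 1)) $ i"
    using i by (simp add: adj_mat_def scalar_prod_def sum.If_cases Int_def)
qed (simp add: adj_mat_def)

lemma adj_mat_quadratic_form_indicator_vec:
  assumes S: "S \<subseteq> {0..<n}"
  shows "indicator_vec n S \<bullet> (adj_mat n E *\<^sub>v indicator_vec n S) = (\<Sum>u\<in>S. real (card (nbhd E u \<inter> S)))"
proof -
  have "indicator_vec n S \<bullet> (adj_mat n E *\<^sub>v indicator_vec n S)
      = (\<Sum>i\<in>{0..<n}. if i \<in> S then (\<Sum>j\<in>{0..<n}. if E i j \<and> j \<in> S then 1 else 0) else (0::real))"
    by (auto simp: indicator_vec_def adj_mat_def scalar_prod_def intro!: sum.cong)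
  also have "\<dots> = (\<Sum>u\<in>S. (\<Sum>j\<in>{0..<n}. if E u j \<and> j \<in> S then 1 else 0))"
    using S by (simp add: sum.If_cases Int_absorb1)
  also have "\<dots> = (\<Sum>u\<in>S. real (card (nbhd E u \<inter> S)))"
  proof (rule sum.cong)
    fix u
    have "nbhd E u \<inter> S = {j \<in> {0..<n}. E u j \<and> j \<in> S}" using S by (auto simp: nbhd_def)
    then show "(\<Sum>j\<in>{0..<n}. if E u j \<and> j \<in> S then 1 else 0) = real (card (nbhd E u \<inter> S))"
      by (simp add: sum.If_cases Int_def)
  qed (rule refl)
  finally show ?thesis .
qed

lemma nd_lambda_graph_inner_degree_sum_le:
  assumes G: "nd_lambda_graph n d lam E" and gap: "lam < d"
    and S: "S \<subseteq> {0..<n}" and n: "0 < n"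
  shows "(\<Sum>u\<in>S. real (card (nbhd E u \<inter> S)))
    \<le> d * (real (card S))\<^sup>2 / n + lam * (real (card S) - (real (card S))\<^sup>2 / n)"
proof -
  obtain ls where sg: "simple_graph n E" and reg: "regular n E d"
    and cp: "char_poly (adj_mat n E) = (\<Prod>a\<leftarrow>ls. [:- a, 1:])" and top: "ls ! 0 = real d"
    and rest: "\<And>i. 1 \<le> i \<Longrightarrow> i < n \<Longrightarrow> \<bar>ls ! i\<bar> \<le> lam"
    using G unfolding nd_lambda_graph_def by blast
  have "indicator_vec n S \<bullet> (adj_mat n E *\<^sub>v indicator_vec n S)
      \<le> d * (indicator_vec n S \<bullet> vec n (\<lambda>_. 1))\<^sup>2 / n
        + lam * (indicator_vec n S \<bullet> indicator_vec n S - (indicator_vec n S \<bullet> vec n (\<lambda>_. 1))\<^sup>2 / n)"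
    using rest by (intro quadratic_form_le_by_second_eigenvalue[OF _ transpose_adj_mat[OF sg] cp
          adj_mat_mult_ones[OF sg reg] top _ gap n]) force+
  then show ?thesis
    using S by (simp add: adj_mat_quadratic_form_indicator_vec scalar_prod_indicator_vec_ones
        scalar_prod_indicator_vec_self)
qed

section \<open>Bootstrap percolation\<close>

lemma boot_step_funpow_mono:
  "i \<le> j \<Longrightarrow> (boot_step n r E ^^ i) A \<subseteq> (boot_step n r E ^^ j) A"
  by (rule lift_Suc_mono_le[of "\<lambda>i. (boot_step n r E ^^ i) A"]) (auto simp: boot_step_def)

lemma boot_step_funpow_subset:
  "A \<subseteq> {0..<n} \<Longrightarrow> (boot_step n r E ^^ i) A \<subseteq> {0..<n}"
  by (induction i) (auto simp: boot_step_def)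

lemma subset_boot_closure: "A \<subseteq> boot_closure n r E A"
  unfolding boot_closure_def by (rule subset_trans[OF _ UN_upper[of 0]]) auto

lemma boot_closure_subset:
  assumes "A \<subseteq> {0..<n}"
  shows "boot_closure n r E A \<subseteq> {0..<n}"
  using boot_step_funpow_subset[OF assms] by (auto simp: boot_closure_def)

lemma finite_subset_boot_closure:
  assumes "finite F" "F \<subseteq> boot_closure n r E A"
  shows "\<exists>k. F \<subseteq> (boot_step n r E ^^ k) A"
  using assms
proof (induction F rule: finite_induct)
  case (insert x F)
  then obtain k where k: "F \<subseteq> (boot_step n r E ^^ k) A" by auto
  obtain i where i: "x \<in> (boot_step n r E ^^ i) A"
    using insert.prems by (auto simp: boot_closure_def)
  show ?case
    using boot_step_funpow_mono[of k "max i k" n r E A] boot_step_funpow_mono[of i "max i k" n r E A] i k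
    by (intro exI[of _ "max i k"]) auto
qed simp

lemma card_nbhd_inter_boot_closure_less:
  assumes v: "v < n" "v \<notin> boot_closure n r E A" and fin: "finite (nbhd E v)"
  shows "card (nbhd E v \<inter> boot_closure n r E A) < r"
proof (rule ccontr)
  assume "\<not> ?thesis"
  moreover obtain k where k: "nbhd E v \<inter> boot_closure n r E A \<subseteq> (boot_step n r E ^^ k) A"
    using finite_subset_boot_closure[of "nbhd E v \<inter> boot_closure n r E A" n r E A] fin by auto
  then have "card (nbhd E v \<inter> boot_closure n r E A) \<le> card (nbhd E v \<inter> (boot_step n r E ^^ k) A)"
    using fin by (intro card_mono) auto
  ultimately have "v \<in> (boot_step n r E ^^ Suc k) A"
    using v by (auto simp: boot_step_def)
  then show False
    using v unfolding boot_closure_def by blast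
qed

lemma card_nbhd_inter_compl_boot_closure:
  assumes sg: "simple_graph n E" and reg: "regular n E d"
    and u: "u \<in> {0..<n} - boot_closure n r E A"
  shows "real d - (real r - 1) \<le> real (card (nbhd E u \<inter> ({0..<n} - boot_closure n r E A)))"
proof -
  let ?B = "boot_closure n r E A"
  have N1: "nbhd E u \<subseteq> {0..<n}" using nbhd_eq[OF sg] by auto
  then have N: "nbhd E u \<subseteq> {0..<n}" "finite (nbhd E u)"
    using finite_subset[OF N1] by auto
  have "d = card (nbhd E u)" using reg u unfolding regular_def by auto
  also have "\<dots> = card (nbhd E u \<inter> ({0..<n} - ?B)) + card (nbhd E u \<inter> ?B)"
  proof -
    have "nbhd E u = (nbhd E u \<inter> ({0..<n} - ?B)) \<union> (nbhd E u \<inter> ?B)" using N by auto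
    moreover have "card ((nbhd E u \<inter> ({0..<n} - ?B)) \<union> (nbhd E u \<inter> ?B))
        = card (nbhd E u \<inter> ({0..<n} - ?B)) + card (nbhd E u \<inter> ?B)"
      using N(2) by (intro card_Un_disjoint) auto
    ultimately show ?thesis by simp
  qed
  finally show ?thesis
    using card_nbhd_inter_boot_closure_less[of u n r E A] N u by auto
qed

lemma nd_lambda_graph_lambda_nonneg:
  assumes "nd_lambda_graph n d lam E" "2 \<le> n"
  shows "0 \<le> lam"
proof -
  obtain ls :: "real list" where "\<And>i. 1 \<le> i \<Longrightarrow> i < n \<Longrightarrow> \<bar>ls ! i\<bar> \<le> lam"
    using assms(1) unfolding nd_lambda_graph_def by blast
  from this[of 1] show ?thesis using assms(2) by linarith
qed

lemma boot_closure_card_bound: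
  assumes G: "nd_lambda_graph n d lam E" and gap: "lam < d"
    and A: "A \<subseteq> {0..<n}" and not_all: "boot_closure n r E A \<noteq> {0..<n}"
  shows "(real d - lam) * real (card (boot_closure n r E A)) \<le> (real r - 1) * real n"
proof -
  let ?B = "boot_closure n r E A"
  define S where "S = {0..<n} - ?B"
  define s b where "s = real (card S)" and "b = real (card ?B)"
  have sg: "simple_graph n E" and reg: "regular n E d"
    using G by (auto simp: nd_lambda_graph_def)
  have B: "?B \<subseteq> {0..<n}" using boot_closure_subset[OF A] .
  have "card S + card ?B = n"
    using B card_Diff_subset[OF finite_subset[OF B] B] card_mono[OF _ B] by (simp add: S_def)
  then have sb: "s + b = n" by (simp add: s_def b_def flip: of_nat_add)
  have "S \<noteq> {}" using not_all B by (auto simp: S_def)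
  then have s: "0 < s" by (simp add: s_def S_def card_gt_0_iff)
  then have n: "0 < n" using sb b_def by linarith
  have "s * (d - (real r - 1)) \<le> (\<Sum>u\<in>S. real (card (nbhd E u \<inter> S)))"
    using sum_mono[of S "\<lambda>_. real d - (real r - 1)"] card_nbhd_inter_compl_boot_closure[OF sg reg]
    by (simp add: s_def S_def)
  also have "\<dots> \<le> d * s\<^sup>2 / n + lam * (s - s\<^sup>2 / n)"
    using nd_lambda_graph_inner_degree_sum_le[OF G gap _ n, of S] by (simp add: s_def S_def)
  also have "\<dots> = s * ((d * s + lam * (n - s)) / n)"
    using n by (simp add: field_simps power2_eq_square)
  finally have "n * (d - (real r - 1)) \<le> d * s + lam * (n - s)"
    using s n by (simp add: pos_le_divide_eq mult.commute)
  moreover have "s = n - b" using sb by simp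
  ultimately show ?thesis by (simp add: b_def algebra_simps)
qed

theorem lemma7:
  fixes n d r :: nat and lam \<delta> :: real and E :: "nat \<Rightarrow> nat \<Rightarrow> bool" and A :: "nat set"
  assumes "0 < \<delta>" "\<delta> < 1" "r \<ge> 2"
    and "nd_lambda_graph n d lam E"
    and "lam < \<delta> * real d"
    and "A \<subseteq> {0..<n}"
    and "real (card A) > (real r - 1) * real n / ((1 - \<delta>) * real d)"
  shows "contagious n r E A"
proof (rule ccontr)
  let ?B = "boot_closure n r E A"
  assume "\<not> contagious n r E A"
  then have not_all: "?B \<noteq> {0..<n}" by (simp add: contagious_def)
  then obtain v where v: "v \<in> {0..<n} - ?B"
    using boot_closure_subset[OF assms(6), of r E] by blast
  have "0 \<le> (real r - 1) * real n / ((1 - \<delta>) * real d)"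
    using assms(2,3) by simp
  then obtain a where "a \<in> A" using assms(7) by fastforce
  then have "a \<noteq> v" "a < n" "v < n" using v subset_boot_closure[of A n r E] assms(6) by auto
  then have "2 \<le> n" by linarith
  then have "0 \<le> lam" using nd_lambda_graph_lambda_nonneg[OF assms(4)] by blast
  then have d: "0 < real d" using assms(5) by (cases "d = 0") auto
  then have gap: "lam < real d" using assms(2,5) by (smt (verit) mult_less_cancel_right2)
  have "(real r - 1) * real n < real (card A) * ((1 - \<delta>) * real d)"
    using assms(7) assms(2) d by (simp add: pos_divide_less_eq)
  also have "\<dots> \<le> real (card ?B) * (real d - lam)"
    using card_mono[OF finite_subset[OF boot_closure_subset[OF assms(6)]] subset_boot_closure] assms(2,5) d
    by (intro mult_mono) (auto simp: algebra_simps)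
  also have "\<dots> \<le> (real r - 1) * real n"
    using boot_closure_card_bound[OF assms(4) gap assms(6) not_all] by (simp add: mult.commute)
  finally show False by simp
qed

end
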